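(* Let $M_I$ and $N_J$ be factor systems with limits $M$ and $N$ respectively, and assume Condition (D). Then $[M\to_{\mathcal F}N]$ is a limit of $[M_I\to N_J]$. Equivalently, there is an isomorphism $[\mathrm{elem}(M_I)\to_{\mathcal F}\mathrm{elem}(N_J)]\simeq\mathrm{elem}([M_I\to N_J])$.
   Context: For every non-empty directed preordered set $I$ a family $\mathcal F(I)$ of subsets is fixed, each cofinal, closed under supersets and finite intersections, containing all non-empty upward closed subsets. Condition (D): for all such $I,J$, $H\in\mathcal F(I\times J)$ and $I'\in\mathcal F(I)$ imply $\{j\mid\exists i\in I',(i,j)\in H\}\in\mathcal F(J)$. System $(M_I,\triangleright)$: pairwise disjoint sets $M_i$ with relations $\triangleright\subseteq M_{i'}\times M_i$ ($i\le i'$), reflexive for $i=i'$; $a_i\approx b_j$ iff some $c\in M_{i'}$, $i'\ge i,j$, has $c\triangleright a_i,c\triangleright b_j$; prefactor: $a_{i'}\approx a_i\iff a_{i'}\triangleright a_i$. Factor system: prefactor system with $\approx$-preserving $emb_{i,i'}:M_i\to M_{i'}$, $proj_{i',i}:M_{i'}\to M_i$ with $emb_{i,i}(a)\approx a$, $proj_{i,i}(a)\approx a$, $emb_{i',i''}\circ emb_{i,i'}(a)\approx emb_{i,i''}(a)$, $proj_{i',i}\circ proj_{i'',i'}(a)\approx proj_{i'',i}(a)$, $proj_{i',i}(emb_{i,i'}(a))\approx a$, and $a_{i'}\triangleright a_i\Rightarrow emb_{i',i''}(a_{i'})\triangleright a_i$, $a_{i''}\triangleright a_i\Rightarrow proj_{i'',i'}(a_{i''})\triangleright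 a_i$ ($i\le i'\le i''$). Function space $[M_I\to N_J]$: indices $i\to j\in I\times J$ (product order), states = $\approx$-preserving functions $M_i\to N_j$, $f'\triangleright f$ iff $a_{i'}\triangleright a_i\Rightarrow f'(a_{i'})\triangleright f(a_i)$, embeddings $f\mapsto emb_{j,j'}\circ f\circ proj_{i',i}$, projections $f'\mapsto proj_{j',j}\circ f'\circ emb_{i,i'}$. A target for $M_I$: a set $M$ with a relation $a\triangleright a_i$ ($a\in M$, $a_i\in M_i$) such that $I_a:=\{i\mid\exists a_i,a\triangleright a_i\}\in\mathcal F(I)$ and $a\triangleright a_{i'}$, $a\triangleright a_i$ imply $a_{i'}\triangleright a_i$ (for factor systems also with maps $Emb_i:M_i\to M$, $Proj_i:M\to M_i$ extending the structure). A limit of $M_I$ is a target $M$ such that for every target $N'$ there is a unique map $\Phi:N'\to M$ with $b\triangleright a_i\Rightarrow\Phi(b)\triangleright a_i$; limits are unique up to isomorphism. A consistent set is $\alpha\subseteq\bigcup_iM_i$ whose elements are pairwise related by $\triangleright$ (higher stage to lower) with $\{i\mid\alpha\cap M_i\ne\emptyset\}\in\mathcal F(I)$; $\mathrm{elem}(M_I)$ is the set of inclusion-maximal consistent sets, which with the relation $\alpha\triangleright a_i\iff a_i\in\alpha$ is a limit of $M_I$. For targets $M,N$: $[M\to_{\mathcal F}N]:=\{f:M\to N\mid I_f\in\mathcal F(I\times J)\}$ with $f\triangleright f_{i\to j}$ iff for all $a\in M$, $a_i\in M_i$ with $a\triangleright a_i$, $f(a)\triangleright f_{i\to j}(a_i)$,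 and $I_f:=\{i\to j\mid\exists f_{i\to j},f\triangleright f_{i\to j}\}$. *)

theory Defs
  imports Main "HOL-Library.FuncSet"
begin

definition directed_preorder :: "'i set \<Rightarrow> ('i \<Rightarrow> 'i \<Rightarrow> bool) \<Rightarrow> bool" where
  "directed_preorder I le \<longleftrightarrow>
     I \<noteq> {} \<and>
     (\<forall>i\<in>I. le i i) \<and>
     (\<forall>i\<in>I. \<forall>j\<in>I. \<forall>k\<in>I. le i j \<longrightarrow> le j k \<longrightarrow> le i k) \<and>
     (\<forall>i\<in>I. \<forall>j\<in>I. \<exists>k\<in>I. le i k \<and> le j k)"

definition upward_closed :: "'i set \<Rightarrow> ('i \<Rightarrow> 'i \<Rightarrow> bool) \<Rightarrow> 'i set \<Rightarrow> bool" where
  "upward_closed I le X \<longleftrightarrow> X \<subseteq> I \<and> (\<forall>i\<in>X. \<forall>i'\<in>I. le i i' \<longrightarrow> i' \<in> X)"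

definition cofinal :: "'i set \<Rightarrow> ('i \<Rightarrow> 'i \<Rightarrow> bool) \<Rightarrow> 'i set \<Rightarrow> bool" where
  "cofinal I le X \<longleftrightarrow> X \<subseteq> I \<and> (\<forall>i\<in>I. \<exists>k\<in>X. le i k)"

definition filter_family :: "'i set \<Rightarrow> ('i \<Rightarrow> 'i \<Rightarrow> bool) \<Rightarrow> 'i set set \<Rightarrow> bool" where
  "filter_family I le F \<longleftrightarrow>
     (\<forall>X\<in>F. cofinal I le X) \<and>
     (\<forall>X\<in>F. \<forall>Y. X \<subseteq> Y \<and> Y \<subseteq> I \<longrightarrow> Y \<in> F) \<and>
     (\<forall>X\<in>F. \<forall>Y\<in>F. X \<inter> Y \<in> F) \<and>
     (\<forall>X. X \<noteq> {} \<and> upward_closed I le X \<longrightarrow> X \<in> F)"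

text \<open>Product order on I \<times> J (indices i \<rightarrow> j of the function space).\<close>
definition prod_le :: "('i \<Rightarrow> 'i \<Rightarrow> bool) \<Rightarrow> ('j \<Rightarrow> 'j \<Rightarrow> bool) \<Rightarrow> 'i \<times> 'j \<Rightarrow> 'i \<times> 'j \<Rightarrow> bool" where
  "prod_le leI leJ p q \<longleftrightarrow> leI (fst p) (fst q) \<and> leJ (snd p) (snd q)"

definition condition_D :: "'i set \<Rightarrow> 'j set \<Rightarrow> 'i set set \<Rightarrow> 'j set set \<Rightarrow> ('i \<times> 'j) set set \<Rightarrow> bool" where
  "condition_D I J FI FJ FIJ \<longleftrightarrow>
     (\<forall>H\<in>FIJ. \<forall>I'\<in>FI. {j \<in> J. \<exists>i\<in>I'. (i, j) \<in> H} \<in> FJ)"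

text \<open>A system (M_I, \<triangleright>): stage sets Ms i (i \<in> I) and one relation tr on states;
  tr a' a stands for a' \<triangleright> a with a' in a higher stage than a.\<close>
definition is_system :: "'i set \<Rightarrow> ('i \<Rightarrow> 'i \<Rightarrow> bool) \<Rightarrow> ('i \<Rightarrow> 'a set) \<Rightarrow> ('a \<Rightarrow> 'a \<Rightarrow> bool) \<Rightarrow> bool" where
  "is_system I le Ms tr \<longleftrightarrow>
     (\<forall>i\<in>I. \<forall>j\<in>I. i \<noteq> j \<longrightarrow> Ms i \<inter> Ms j = {}) \<and>
     (\<forall>a' a. tr a' a \<longrightarrow> (\<exists>i\<in>I. \<exists>i'\<in>I. le i i' \<and> a' \<in> Ms i' \<and> a \<in> Ms i)) \<and>
     (\<forall>i\<in>I. \<forall>a\<in>Ms i. tr a a)"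

definition sys_approx :: "'i set \<Rightarrow> ('i \<Rightarrow> 'i \<Rightarrow> bool) \<Rightarrow> ('i \<Rightarrow> 'a set) \<Rightarrow> ('a \<Rightarrow> 'a \<Rightarrow> bool) \<Rightarrow> 'a \<Rightarrow> 'a \<Rightarrow> bool" where
  "sys_approx I le Ms tr a b \<longleftrightarrow>
     (\<exists>i\<in>I. \<exists>j\<in>I. \<exists>i'\<in>I. a \<in> Ms i \<and> b \<in> Ms j \<and> le i i' \<and> le j i' \<and>
        (\<exists>c\<in>Ms i'. tr c a \<and> tr c b))"

definition prefactor_system :: "'i set \<Rightarrow> ('i \<Rightarrow> 'i \<Rightarrow> bool) \<Rightarrow> ('i \<Rightarrow> 'a set) \<Rightarrow> ('a \<Rightarrow> 'a \<Rightarrow> bool) \<Rightarrow> bool" where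
  "prefactor_system I le Ms tr \<longleftrightarrow>
     is_system I le Ms tr \<and>
     (\<forall>i\<in>I. \<forall>i'\<in>I. le i i' \<longrightarrow>
        (\<forall>a'\<in>Ms i'. \<forall>a\<in>Ms i. sys_approx I le Ms tr a' a \<longleftrightarrow> tr a' a))"

definition approx_preserving ::
  "'i set \<Rightarrow> ('i \<Rightarrow> 'i \<Rightarrow> bool) \<Rightarrow> ('i \<Rightarrow> 'a set) \<Rightarrow> ('a \<Rightarrow> 'a \<Rightarrow> bool) \<Rightarrow>
   'j set \<Rightarrow> ('j \<Rightarrow> 'j \<Rightarrow> bool) \<Rightarrow> ('j \<Rightarrow> 'b set) \<Rightarrow> ('b \<Rightarrow> 'b \<Rightarrow> bool) \<Rightarrow>
   'i \<Rightarrow> 'j \<Rightarrow> ('a \<Rightarrow> 'b) \<Rightarrow> bool" where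
  "approx_preserving I leI Ms trM J leJ Ns trN i j f \<longleftrightarrow>
     (\<forall>a\<in>Ms i. f a \<in> Ns j) \<and>
     (\<forall>a\<in>Ms i. \<forall>b\<in>Ms i. sys_approx I leI Ms trM a b \<longrightarrow> sys_approx J leJ Ns trN (f a) (f b))"

definition factor_system ::
  "'i set \<Rightarrow> ('i \<Rightarrow> 'i \<Rightarrow> bool) \<Rightarrow> ('i \<Rightarrow> 'a set) \<Rightarrow> ('a \<Rightarrow> 'a \<Rightarrow> bool) \<Rightarrow>
   ('i \<Rightarrow> 'i \<Rightarrow> 'a \<Rightarrow> 'a) \<Rightarrow> ('i \<Rightarrow> 'i \<Rightarrow> 'a \<Rightarrow> 'a) \<Rightarrow> bool" where
  "factor_system I le Ms tr emb proj \<longleftrightarrow>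
     prefactor_system I le Ms tr \<and>
     (\<forall>i\<in>I. \<forall>i'\<in>I. le i i' \<longrightarrow>
        approx_preserving I le Ms tr I le Ms tr i i' (emb i i') \<and>
        approx_preserving I le Ms tr I le Ms tr i' i (proj i' i)) \<and>
     (\<forall>i\<in>I. \<forall>a\<in>Ms i. sys_approx I le Ms tr (emb i i a) a \<and> sys_approx I le Ms tr (proj i i a) a) \<and>
     (\<forall>i\<in>I. \<forall>i'\<in>I. \<forall>i''\<in>I. le i i' \<longrightarrow> le i' i'' \<longrightarrow>
        (\<forall>a\<in>Ms i. sys_approx I le Ms tr (emb i' i'' (emb i i' a)) (emb i i'' a)) \<and>
        (\<forall>a\<in>Ms i''. sys_approx I le Ms tr (proj i' i (proj i'' i' a)) (proj i'' i a)) \<and>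
        (\<forall>a'\<in>Ms i'. \<forall>a\<in>Ms i. tr a' a \<longrightarrow> tr (emb i' i'' a') a) \<and>
        (\<forall>a''\<in>Ms i''. \<forall>a\<in>Ms i. tr a'' a \<longrightarrow> tr (proj i'' i' a'') a)) \<and>
     (\<forall>i\<in>I. \<forall>i'\<in>I. le i i' \<longrightarrow>
        (\<forall>a\<in>Ms i. sys_approx I le Ms tr (proj i' i (emb i i' a)) a))"

text \<open>States at index i \<rightarrow> j are tagged by their index (so that stages are disjoint) and are
  \<approx>-preserving maps Ms i \<rightarrow> Ns j, taken extensional (undefined outside Ms i).\<close>
definition fs_states ::
  "'i set \<Rightarrow> ('i \<Rightarrow> 'i \<Rightarrow> bool) \<Rightarrow> ('i \<Rightarrow> 'a set) \<Rightarrow> ('a \<Rightarrow> 'a \<Rightarrow> bool) \<Rightarrow>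
   'j set \<Rightarrow> ('j \<Rightarrow> 'j \<Rightarrow> bool) \<Rightarrow> ('j \<Rightarrow> 'b set) \<Rightarrow> ('b \<Rightarrow> 'b \<Rightarrow> bool) \<Rightarrow>
   'i \<times> 'j \<Rightarrow> (('i \<times> 'j) \<times> ('a \<Rightarrow> 'b)) set" where
  "fs_states I leI Ms trM J leJ Ns trN p =
     {(p, f) | f. f \<in> extensional (Ms (fst p)) \<and>
        approx_preserving I leI Ms trM J leJ Ns trN (fst p) (snd p) f}"

definition fs_tr ::
  "'i set \<Rightarrow> ('i \<Rightarrow> 'i \<Rightarrow> bool) \<Rightarrow> ('i \<Rightarrow> 'a set) \<Rightarrow> ('a \<Rightarrow> 'a \<Rightarrow> bool) \<Rightarrow>
   'j set \<Rightarrow> ('j \<Rightarrow> 'j \<Rightarrow> bool) \<Rightarrow> ('j \<Rightarrow> 'b set) \<Rightarrow> ('b \<Rightarrow> 'b \<Rightarrow> bool) \<Rightarrow>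
   ('i \<times> 'j) \<times> ('a \<Rightarrow> 'b) \<Rightarrow> ('i \<times> 'j) \<times> ('a \<Rightarrow> 'b) \<Rightarrow> bool" where
  "fs_tr I leI Ms trM J leJ Ns trN F' F \<longleftrightarrow>
     fst F' \<in> I \<times> J \<and> fst F \<in> I \<times> J \<and> prod_le leI leJ (fst F) (fst F') \<and>
     F' \<in> fs_states I leI Ms trM J leJ Ns trN (fst F') \<and>
     F \<in> fs_states I leI Ms trM J leJ Ns trN (fst F) \<and>
     (\<forall>a'\<in>Ms (fst (fst F')). \<forall>a\<in>Ms (fst (fst F)).
        trM a' a \<longrightarrow> trN (snd F' a') (snd F a))"

text \<open>A target (T, R) of the system: R t a means t \<triangleright> a.\<close>
definition is_target ::
  "'i set \<Rightarrow> ('i \<Rightarrow> 'i \<Rightarrow> bool) \<Rightarrow> 'i set set \<Rightarrow> ('i \<Rightarrow> 'a set) \<Rightarrow> ('a \<Rightarrow> 'a \<Rightarrow> bool) \<Rightarrow>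
   't set \<Rightarrow> ('t \<Rightarrow> 'a \<Rightarrow> bool) \<Rightarrow> bool" where
  "is_target I le F Ms tr T R \<longleftrightarrow>
     (\<forall>t\<in>T. {i \<in> I. \<exists>a\<in>Ms i. R t a} \<in> F) \<and>
     (\<forall>t\<in>T. \<forall>i\<in>I. \<forall>i'\<in>I. le i i' \<longrightarrow>
        (\<forall>a'\<in>Ms i'. \<forall>a\<in>Ms i. R t a' \<longrightarrow> R t a \<longrightarrow> tr a' a))"

text \<open>(T, R) is a limit with respect to all targets whose carrier has type 'c.\<close>
definition is_limit ::
  "'c itself \<Rightarrow> 'i set \<Rightarrow> ('i \<Rightarrow> 'i \<Rightarrow> bool) \<Rightarrow> 'i set set \<Rightarrow> ('i \<Rightarrow> 'a set) \<Rightarrow> ('a \<Rightarrow> 'a \<Rightarrow> bool) \<Rightarrow>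
   't set \<Rightarrow> ('t \<Rightarrow> 'a \<Rightarrow> bool) \<Rightarrow> bool" where
  "is_limit _ I le F Ms tr T R \<longleftrightarrow>
     is_target I le F Ms tr T R \<and>
     (\<forall>(T' :: 'c set) R'. is_target I le F Ms tr T' R' \<longrightarrow>
        (\<exists>!\<Phi>. \<Phi> \<in> T' \<rightarrow>\<^sub>E T \<and>
            (\<forall>b\<in>T'. \<forall>i\<in>I. \<forall>a\<in>Ms i. R' b a \<longrightarrow> R (\<Phi> b) a)))"

definition funF_rel ::
  "'i set \<Rightarrow> ('i \<Rightarrow> 'i \<Rightarrow> bool) \<Rightarrow> ('i \<Rightarrow> 'a set) \<Rightarrow> ('a \<Rightarrow> 'a \<Rightarrow> bool) \<Rightarrow>
   'j set \<Rightarrow> ('j \<Rightarrow> 'j \<Rightarrow> bool) \<Rightarrow> ('j \<Rightarrow> 'b set) \<Rightarrow> ('b \<Rightarrow> 'b \<Rightarrow> bool) \<Rightarrow>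
   'm set \<Rightarrow> ('m \<Rightarrow> 'a \<Rightarrow> bool) \<Rightarrow> ('n \<Rightarrow> 'b \<Rightarrow> bool) \<Rightarrow>
   ('m \<Rightarrow> 'n) \<Rightarrow> ('i \<times> 'j) \<times> ('a \<Rightarrow> 'b) \<Rightarrow> bool" where
  "funF_rel I leI Ms trM J leJ Ns trN TM RM RN f G \<longleftrightarrow>
     fst G \<in> I \<times> J \<and> G \<in> fs_states I leI Ms trM J leJ Ns trN (fst G) \<and>
     (\<forall>a\<in>TM. \<forall>ai\<in>Ms (fst (fst G)). RM a ai \<longrightarrow> RN (f a) (snd G ai))"

definition funF_index ::
  "'i set \<Rightarrow> ('i \<Rightarrow> 'i \<Rightarrow> bool) \<Rightarrow> ('i \<Rightarrow> 'a set) \<Rightarrow> ('a \<Rightarrow> 'a \<Rightarrow> bool) \<Rightarrow>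
   'j set \<Rightarrow> ('j \<Rightarrow> 'j \<Rightarrow> bool) \<Rightarrow> ('j \<Rightarrow> 'b set) \<Rightarrow> ('b \<Rightarrow> 'b \<Rightarrow> bool) \<Rightarrow>
   'm set \<Rightarrow> ('m \<Rightarrow> 'a \<Rightarrow> bool) \<Rightarrow> ('n \<Rightarrow> 'b \<Rightarrow> bool) \<Rightarrow>
   ('m \<Rightarrow> 'n) \<Rightarrow> ('i \<times> 'j) set" where
  "funF_index I leI Ms trM J leJ Ns trN TM RM RN f =
     {p \<in> I \<times> J. \<exists>G\<in>fs_states I leI Ms trM J leJ Ns trN p.
                   funF_rel I leI Ms trM J leJ Ns trN TM RM RN f G}"

definition funF ::
  "'i set \<Rightarrow> ('i \<Rightarrow> 'i \<Rightarrow> bool) \<Rightarrow> ('i \<Rightarrow> 'a set) \<Rightarrow> ('a \<Rightarrow> 'a \<Rightarrow> bool) \<Rightarrow>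
   'j set \<Rightarrow> ('j \<Rightarrow> 'j \<Rightarrow> bool) \<Rightarrow> ('j \<Rightarrow> 'b set) \<Rightarrow> ('b \<Rightarrow> 'b \<Rightarrow> bool) \<Rightarrow>
   ('i \<times> 'j) set set \<Rightarrow>
   'm set \<Rightarrow> ('m \<Rightarrow> 'a \<Rightarrow> bool) \<Rightarrow> 'n set \<Rightarrow> ('n \<Rightarrow> 'b \<Rightarrow> bool) \<Rightarrow> ('m \<Rightarrow> 'n) set" where
  "funF I leI Ms trM J leJ Ns trN FIJ TM RM TN RN =
     {f. f \<in> TM \<rightarrow>\<^sub>E TN \<and> funF_index I leI Ms trM J leJ Ns trN TM RM RN f \<in> FIJ}"

end

theory Submission
  imports Defs
begin

text \<open>
  Two comparable states a' \<triangleright> a of a factor system lie in the consistent set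
  {a, a'} \<union> {emb i' k a' | k \<ge> i'}, hence below one point of the limit M. So if f \<triangleright> G' and
  f \<triangleright> G, then G' a' and G a lie below the single point f m of N, and therefore
  G' a' \<triangleright> G a: [M \<rightarrow>_F N] is a target.

  Conversely, let b be a point of any target of [M_I \<rightarrow> N_J] and m \<in> M. The values G a_i with
  b \<triangleright> G and m \<triangleright> a_i form a consistent set of N_J: Condition (D) provides enough stages, and
  two such values lie below a third one taken at a common refinement of both stages (again by
  Condition (D)), so they are \<approx>-related and hence comparable. Mapping m to the limit point of
  this set in N defines the unique map into [M \<rightarrow>_F N].
\<close>

lemma ex1_PiE:
  assumes "\<And>x. x \<in> A \<Longrightarrow> \<exists>!y. y \<in> B \<and> P x y"
  shows "\<exists>!f. f \<in> A \<rightarrow>\<^sub>E B \<and> (\<forall>x\<in>A. P x (f x))"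
proof (rule ex1I[of _ "\<lambda>x\<in>A. THE y. y \<in> B \<and> P x y"])
  show "(\<lambda>x\<in>A. THE y. y \<in> B \<and> P x y) \<in> A \<rightarrow>\<^sub>E B \<and>
      (\<forall>x\<in>A. P x ((\<lambda>x\<in>A. THE y. y \<in> B \<and> P x y) x))"
    using theI'[OF assms] by auto
next
  fix f assume f: "f \<in> A \<rightarrow>\<^sub>E B \<and> (\<forall>x\<in>A. P x (f x))"
  show "f = (\<lambda>x\<in>A. THE y. y \<in> B \<and> P x y)"
  proof (rule extensionalityI[of _ A])
    fix x assume x: "x \<in> A"
    then have "f x \<in> B \<and> P x (f x)"
      using f by auto
    with x show "f x = (\<lambda>x\<in>A. THE y. y \<in> B \<and> P x y) x"
      using the1_equality[OF assms[OF x]] by simp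
  qed (use f in \<open>auto simp: PiE_def\<close>)
qed

lemma directed_preorder_nonempty: "directed_preorder I le \<Longrightarrow> I \<noteq> {}"
  unfolding directed_preorder_def by (rule conjunct1)

lemma directed_preorder_refl: "directed_preorder I le \<Longrightarrow> i \<in> I \<Longrightarrow> le i i"
  unfolding directed_preorder_def by blast

lemma directed_preorder_trans:
  "directed_preorder I le \<Longrightarrow> i \<in> I \<Longrightarrow> j \<in> I \<Longrightarrow> k \<in> I \<Longrightarrow> le i j \<Longrightarrow> le j k \<Longrightarrow> le i k"
  unfolding directed_preorder_def by blast

lemma directed_preorder_upper_bound:
  "directed_preorder I le \<Longrightarrow> i \<in> I \<Longrightarrow> j \<in> I \<Longrightarrow> \<exists>k\<in>I. le i k \<and> le j k"
  unfolding directed_preorder_def by blast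

lemma directed_preorder_prod:
  assumes I: "directed_preorder I leI" and J: "directed_preorder J leJ"
  shows "directed_preorder (I \<times> J) (prod_le leI leJ)"
proof -
  have ub: "\<exists>r\<in>I \<times> J. prod_le leI leJ p r \<and> prod_le leI leJ q r"
    if pq: "p \<in> I \<times> J" "q \<in> I \<times> J" for p q
  proof -
    obtain i where "i \<in> I" "leI (fst p) i" "leI (fst q) i"
      using directed_preorder_upper_bound[OF I] pq by (metis mem_Times_iff)
    moreover obtain j where "j \<in> J" "leJ (snd p) j" "leJ (snd q) j"
      using directed_preorder_upper_bound[OF J] pq by (metis mem_Times_iff)
    ultimately show ?thesis by (auto simp: prod_le_def)
  qed
  show ?thesis
    unfolding directed_preorder_def
  proof (intro conjI ballI impI)
    show "I \<times> J \<noteq> {}"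
      using directed_preorder_nonempty[OF I] directed_preorder_nonempty[OF J] by simp
  next
    fix p assume "p \<in> I \<times> J"
    then show "prod_le leI leJ p p"
      using directed_preorder_refl[OF I] directed_preorder_refl[OF J]
      by (auto simp: prod_le_def mem_Times_iff)
  next
    fix p q r assume "p \<in> I \<times> J" "q \<in> I \<times> J" "r \<in> I \<times> J"
      and "prod_le leI leJ p q" "prod_le leI leJ q r"
    then show "prod_le leI leJ p r"
      using directed_preorder_trans[OF I, of "fst p" "fst q" "fst r"]
        directed_preorder_trans[OF J, of "snd p" "snd q" "snd r"]
      unfolding prod_le_def mem_Times_iff by blast
  qed (fact ub)
qed

lemma filter_family_superset:
  "filter_family I le F \<Longrightarrow> X \<in> F \<Longrightarrow> X \<subseteq> Y \<Longrightarrow> Y \<subseteq> I \<Longrightarrow> Y \<in> F"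
  unfolding filter_family_def by blast

lemma filter_family_Int: "filter_family I le F \<Longrightarrow> X \<in> F \<Longrightarrow> Y \<in> F \<Longrightarrow> X \<inter> Y \<in> F"
  unfolding filter_family_def by blast

lemma filter_family_upward_closed:
  "X \<noteq> {} \<Longrightarrow> upward_closed I le X \<Longrightarrow> filter_family I le F \<Longrightarrow> X \<in> F"
  unfolding filter_family_def by blast

lemma filter_family_cofinal: "filter_family I le F \<Longrightarrow> X \<in> F \<Longrightarrow> cofinal I le X"
  unfolding filter_family_def by (elim conjE) (erule bspec)

lemma filter_family_member_nonempty:
  assumes "filter_family I le F" and "directed_preorder I le" and "X \<in> F"
  shows "X \<noteq> {}"
  using directed_preorder_nonempty[OF assms(2)] filter_family_cofinal[OF assms(1,3)]
  unfolding cofinal_def by blast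

lemma filter_family_common_upper_bounds:
  assumes "directed_preorder I le" and "filter_family I le F" and "p \<in> I" and "q \<in> I"
  shows "{r \<in> I. le p r \<and> le q r} \<in> F"
proof -
  have "{r \<in> I. le p r \<and> le q r} \<noteq> {}"
    using directed_preorder_upper_bound[OF assms(1,3,4)] by blast
  moreover have "upward_closed I le {r \<in> I. le p r \<and> le q r}"
    using directed_preorder_trans[OF assms(1)] assms(3,4) unfolding upward_closed_def by blast
  ultimately show ?thesis
    using assms(2) by (rule filter_family_upward_closed)
qed

lemma condition_DD:
  "condition_D I J FI FJ FIJ \<Longrightarrow> H \<in> FIJ \<Longrightarrow> I' \<in> FI \<Longrightarrow> {j \<in> J. \<exists>i\<in>I'. (i, j) \<in> H} \<in> FJ"
  unfolding condition_D_def by blast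

lemma condition_D_witness:
  assumes "condition_D I J FI FJ FIJ" and "directed_preorder J leJ" and "filter_family J leJ FJ"
    and "H \<in> FIJ" and "I' \<in> FI"
  shows "\<exists>i\<in>I'. \<exists>j\<in>J. (i, j) \<in> H"
proof -
  have "{j \<in> J. \<exists>i\<in>I'. (i, j) \<in> H} \<in> FJ"
    using assms(1,4,5) by (rule condition_DD)
  then show ?thesis
    using filter_family_member_nonempty[OF assms(3,2)] by blast
qed

lemma is_system_refl: "is_system I le Ms tr \<Longrightarrow> i \<in> I \<Longrightarrow> a \<in> Ms i \<Longrightarrow> tr a a"
  unfolding is_system_def by blast

lemma is_system_disjoint:
  "is_system I le Ms tr \<Longrightarrow> i \<in> I \<Longrightarrow> j \<in> I \<Longrightarrow> a \<in> Ms i \<Longrightarrow> a \<in> Ms j \<Longrightarrow> i = j"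
  unfolding is_system_def by blast

lemma prefactor_system_is_system: "prefactor_system I le Ms tr \<Longrightarrow> is_system I le Ms tr"
  unfolding prefactor_system_def by blast

lemma prefactor_system_tr_iff:
  "prefactor_system I le Ms tr \<Longrightarrow> i \<in> I \<Longrightarrow> i' \<in> I \<Longrightarrow> le i i' \<Longrightarrow>
   a' \<in> Ms i' \<Longrightarrow> a \<in> Ms i \<Longrightarrow> tr a' a \<longleftrightarrow> sys_approx I le Ms tr a' a"
  unfolding prefactor_system_def by blast

lemma prefactor_system_tr_via_upper_bound:
  assumes "prefactor_system I le Ms tr" and "k \<in> I" "k' \<in> I" "n \<in> I" "le k k'" "le k' n" "le k n"
    and "x \<in> Ms k'" "y \<in> Ms k" "c \<in> Ms n" "tr c x" "tr c y"
  shows "tr x y"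
proof -
  have "sys_approx I le Ms tr x y"
    unfolding sys_approx_def using assms(3,2,4,6,7,8,9,10,11,12) by blast
  then show ?thesis
    using prefactor_system_tr_iff[OF assms(1,2,3,5,8,9)] by blast
qed

lemma factor_system_prefactor: "factor_system I le Ms tr emb proj \<Longrightarrow> prefactor_system I le Ms tr"
  unfolding factor_system_def by (rule conjunct1)

lemma factor_system_emb_in:
  assumes "factor_system I le Ms tr emb proj" and "i \<in> I" "i' \<in> I" "le i i'" "a \<in> Ms i"
  shows "emb i i' a \<in> Ms i'"
  using assms unfolding factor_system_def approx_preserving_def by blast

lemma factor_system_emb_emb:
  assumes "factor_system I le Ms tr emb proj" and "i \<in> I" "i' \<in> I" "i'' \<in> I"
    and "le i i'" "le i' i''" "a \<in> Ms i"
  shows "sys_approx I le Ms tr (emb i' i'' (emb i i' a)) (emb i i'' a)"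
  using assms unfolding factor_system_def by blast

lemma factor_system_emb_tr:
  assumes "factor_system I le Ms tr emb proj" and "i \<in> I" "i' \<in> I" "i'' \<in> I"
    and "le i i'" "le i' i''" "a' \<in> Ms i'" "a \<in> Ms i" "tr a' a"
  shows "tr (emb i' i'' a') a"
  using assms unfolding factor_system_def by blast

lemma factor_system_tr_emb_emb:
  assumes fs: "factor_system I le Ms tr emb proj" and dp: "directed_preorder I le"
    and "i \<in> I" "k \<in> I" "k' \<in> I" "le i k" "le k k'" "a \<in> Ms i"
  shows "tr (emb i k' a) (emb i k a)"
proof -
  have pf: "prefactor_system I le Ms tr"
    using fs by (rule factor_system_prefactor)
  have ik': "le i k'"
    using directed_preorder_trans[OF dp] assms(3-7) by blast
  have e: "emb i k a \<in> Ms k" and e': "emb i k' a \<in> Ms k'"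
    using factor_system_emb_in[OF fs] assms(3-8) ik' by blast+
  define c where "c = emb k k' (emb i k a)"
  have c: "c \<in> Ms k'"
    unfolding c_def using factor_system_emb_in[OF fs assms(4,5,7) e] .
  have "tr c (emb i k a)"
    unfolding c_def using factor_system_emb_tr[OF fs assms(4,4,5) directed_preorder_refl[OF dp]
        assms(7) e e is_system_refl[OF prefactor_system_is_system[OF pf]]] assms(4) e by blast
  moreover have "tr c (emb i k' a)"
    using factor_system_emb_emb[OF fs assms(3-8)] prefactor_system_tr_iff[OF pf assms(5,5)
        directed_preorder_refl[OF dp] c e'] assms(5) unfolding c_def by blast
  ultimately show ?thesis
    using prefactor_system_tr_via_upper_bound[OF pf assms(4,5,5,7) directed_preorder_refl[OF dp]
        assms(7) e' e c] assms(5) by blast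
qed

lemma is_target_index: "is_target I le F Ms tr T R \<Longrightarrow> t \<in> T \<Longrightarrow> {i \<in> I. \<exists>a\<in>Ms i. R t a} \<in> F"
  unfolding is_target_def by blast

lemma is_target_tr:
  "is_target I le F Ms tr T R \<Longrightarrow> t \<in> T \<Longrightarrow> i \<in> I \<Longrightarrow> i' \<in> I \<Longrightarrow> le i i' \<Longrightarrow>
   a' \<in> Ms i' \<Longrightarrow> a \<in> Ms i \<Longrightarrow> R t a' \<Longrightarrow> R t a \<Longrightarrow> tr a' a"
  unfolding is_target_def by blast

lemma is_limit_target: "is_limit X I le F Ms tr T R \<Longrightarrow> is_target I le F Ms tr T R"
  unfolding is_limit_def by (rule conjunct1)

definition consistent_set ::
  "'i set \<Rightarrow> ('i \<Rightarrow> 'i \<Rightarrow> bool) \<Rightarrow> 'i set set \<Rightarrow> ('i \<Rightarrow> 'a set) \<Rightarrow> ('a \<Rightarrow> 'a \<Rightarrow> bool) \<Rightarrow>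
   'a set \<Rightarrow> bool" where
  "consistent_set I le F Ms tr S \<longleftrightarrow>
     {i \<in> I. \<exists>a\<in>Ms i. a \<in> S} \<in> F \<and>
     (\<forall>i\<in>I. \<forall>i'\<in>I. le i i' \<longrightarrow> (\<forall>a'\<in>Ms i'. \<forall>a\<in>Ms i. a' \<in> S \<longrightarrow> a \<in> S \<longrightarrow> tr a' a))"

lemma consistent_set_iff_target:
  "consistent_set I le F Ms tr S \<longleftrightarrow> is_target I le F Ms tr {S} (\<lambda>S a. a \<in> S)"
  unfolding consistent_set_def is_target_def by simp

lemma limit_point_of_consistent_set:
  fixes S :: "'a set"
  assumes lim: "is_limit TYPE('a set) I le F Ms tr T R" and S: "consistent_set I le F Ms tr S"
  shows "\<exists>!t. t \<in> T \<and> (\<forall>i\<in>I. \<forall>a\<in>Ms i. a \<in> S \<longrightarrow> R t a)"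
proof -
  have "\<exists>!\<Phi>. \<Phi> \<in> {S} \<rightarrow>\<^sub>E T \<and> (\<forall>i\<in>I. \<forall>a\<in>Ms i. a \<in> S \<longrightarrow> R (\<Phi> S) a)"
    using lim[unfolded is_limit_def, THEN conjunct2, rule_format,
        OF S[unfolded consistent_set_iff_target]] by simp
  then obtain \<Phi> where \<Phi>: "\<Phi> \<in> {S} \<rightarrow>\<^sub>E T \<and> (\<forall>i\<in>I. \<forall>a\<in>Ms i. a \<in> S \<longrightarrow> R (\<Phi> S) a)"
    and unique: "\<And>\<Psi>. \<Psi> \<in> {S} \<rightarrow>\<^sub>E T \<and> (\<forall>i\<in>I. \<forall>a\<in>Ms i. a \<in> S \<longrightarrow> R (\<Psi> S) a) \<Longrightarrow> \<Psi> = \<Phi>"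
    by (elim ex1E) blast
  show ?thesis
  proof (rule ex1I[of _ "\<Phi> S"])
    fix t assume t: "t \<in> T \<and> (\<forall>i\<in>I. \<forall>a\<in>Ms i. a \<in> S \<longrightarrow> R t a)"
    then have "(\<lambda>_\<in>{S}. t) = \<Phi>"
      by (intro unique) auto
    then show "t = \<Phi> S"
      by (metis restrict_apply' singletonI)
  qed (use \<Phi> in auto)
qed

lemma factor_system_emb_dominates:
  assumes fs: "factor_system I le Ms tr emb proj" and dp: "directed_preorder I le"
    and ii': "i \<in> I" "i' \<in> I" "le i i'" and aa': "a' \<in> Ms i'" "a \<in> Ms i" "tr a' a"
    and x: "x \<in> {a, a'} \<union> {emb i' k a' | k. k \<in> I \<and> le i' k}" "k \<in> I" "x \<in> Ms k"
    and n: "n \<in> I" "le i' n" "le k n"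
  shows "tr (emb i' n a') x"
proof -
  have sys: "is_system I le Ms tr"
    using fs by (intro prefactor_system_is_system factor_system_prefactor)
  consider "x = a" | "x = a'" | m where "x = emb i' m a'" "m \<in> I" "le i' m"
    using x(1) by blast
  then show ?thesis
  proof cases
    case 1
    then show ?thesis
      using factor_system_emb_tr[OF fs ii'(1,2) n(1) ii'(3) n(2) aa'] by simp
  next
    case 2
    then show ?thesis
      using factor_system_emb_tr[OF fs ii'(2,2) n(1) directed_preorder_refl[OF dp ii'(2)]
          n(2) aa'(1,1) is_system_refl[OF sys ii'(2) aa'(1)]]
      by simp
  next
    case 3
    then have "m = k"
      using is_system_disjoint[OF sys] factor_system_emb_in[OF fs ii'(2) _ _ aa'(1)] x(2,3) by blast
    with 3 show ?thesis
      using factor_system_tr_emb_emb[OF fs dp ii'(2) x(2) n(1)] aa'(1) n(3) by simp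
  qed
qed

lemma factor_system_tr_consistent_set:
  assumes fs: "factor_system I le Ms tr emb proj" and dp: "directed_preorder I le"
    and ff: "filter_family I le F"
    and ii': "i \<in> I" "i' \<in> I" "le i i'" and aa': "a' \<in> Ms i'" "a \<in> Ms i" "tr a' a"
  shows "consistent_set I le F Ms tr ({a, a'} \<union> {emb i' k a' | k. k \<in> I \<and> le i' k})"
    (is "consistent_set I le F Ms tr ?S")
proof -
  have emb_in: "emb i' k a' \<in> Ms k" if "k \<in> I" "le i' k" for k
    using factor_system_emb_in[OF fs ii'(2) that aa'(1)] .
  have "{k \<in> I. le i' k} \<in> F"
    using filter_family_common_upper_bounds[OF dp ff ii'(2,2)] by simp
  moreover have "{k \<in> I. le i' k} \<subseteq> {k \<in> I. \<exists>x\<in>Ms k. x \<in> ?S}"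
    using emb_in by blast
  ultimately have "{k \<in> I. \<exists>x\<in>Ms k. x \<in> ?S} \<in> F"
    using filter_family_superset[OF ff] by blast
  moreover have "tr x y" if k: "k \<in> I" "k' \<in> I" "le k k'"
    and xy: "x \<in> Ms k'" "y \<in> Ms k" "x \<in> ?S" "y \<in> ?S" for k k' x y
  proof -
    obtain n where n: "n \<in> I" "le k' n" "le i' n"
      using directed_preorder_upper_bound[OF dp k(2) ii'(2)] by blast
    then have "le k n"
      using directed_preorder_trans[OF dp k(1,2)] k(3) by blast
    txt \<open>Both x and y lie below emb i' n a', so they are \<approx>-related.\<close>
    then show ?thesis
      using prefactor_system_tr_via_upper_bound[OF factor_system_prefactor[OF fs] k(1,2) n(1) k(3)
          n(2) _ xy(1,2) emb_in[OF n(1,3)]]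
        factor_system_emb_dominates[OF fs dp ii' aa'] k xy n by blast
  qed
  ultimately show ?thesis
    unfolding consistent_set_def by blast
qed

lemma limit_witness_of_tr:
  fixes Ms :: "'i \<Rightarrow> 'a set"
  assumes "factor_system I le Ms tr emb proj" and "directed_preorder I le"
    and "filter_family I le F" and lim: "is_limit TYPE('a set) I le F Ms tr T R"
    and "i \<in> I" "i' \<in> I" "le i i'" and "a' \<in> Ms i'" "a \<in> Ms i" "tr a' a"
  shows "\<exists>t\<in>T. R t a' \<and> R t a"
proof -
  obtain t where "t \<in> T"
    and "\<forall>k\<in>I. \<forall>x\<in>Ms k. x \<in> {a, a'} \<union> {emb i' k a' | k. k \<in> I \<and> le i' k} \<longrightarrow> R t x"
    using limit_point_of_consistent_set[OF lim factor_system_tr_consistent_set[OF assms(1-3,5-10)]]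
    by blast
  then show ?thesis
    using assms(5,6,8,9) by blast
qed

lemma fs_states_iff:
  "G \<in> fs_states I leI Ms trM J leJ Ns trN p \<longleftrightarrow>
   fst G = p \<and> snd G \<in> extensional (Ms (fst p)) \<and>
   approx_preserving I leI Ms trM J leJ Ns trN (fst p) (snd p) (snd G)"
  by (cases G) (auto simp: fs_states_def)

lemma fs_states_value_in:
  "G \<in> fs_states I leI Ms trM J leJ Ns trN p \<Longrightarrow> a \<in> Ms (fst p) \<Longrightarrow> snd G a \<in> Ns (snd p)"
  by (auto simp: fs_states_iff approx_preserving_def)

lemma funF_is_target:
  fixes Ms :: "'i \<Rightarrow> 'a set"
  assumes dpI: "directed_preorder I leI" and ffI: "filter_family I leI FI"
    and fsM: "factor_system I leI Ms trM embM projM"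
    and limM: "is_limit TYPE('a set) I leI FI Ms trM TM RM"
    and tgN: "is_target J leJ FJ Ns trN TN RN"
  shows "is_target (I \<times> J) (prod_le leI leJ) FIJ (fs_states I leI Ms trM J leJ Ns trN)
           (fs_tr I leI Ms trM J leJ Ns trN) (funF I leI Ms trM J leJ Ns trN FIJ TM RM TN RN)
           (funF_rel I leI Ms trM J leJ Ns trN TM RM RN)"
  unfolding is_target_def
proof (intro conjI ballI impI)
  fix f assume "f \<in> funF I leI Ms trM J leJ Ns trN FIJ TM RM TN RN"
  then show "{p \<in> I \<times> J. \<exists>G\<in>fs_states I leI Ms trM J leJ Ns trN p.
               funF_rel I leI Ms trM J leJ Ns trN TM RM RN f G} \<in> FIJ"
    by (simp add: funF_def funF_index_def)
next
  fix f p p' G' G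
  assume f: "f \<in> funF I leI Ms trM J leJ Ns trN FIJ TM RM TN RN"
    and p: "p \<in> I \<times> J" "p' \<in> I \<times> J" "prod_le leI leJ p p'"
    and G: "G' \<in> fs_states I leI Ms trM J leJ Ns trN p'" "G \<in> fs_states I leI Ms trM J leJ Ns trN p"
    and fG: "funF_rel I leI Ms trM J leJ Ns trN TM RM RN f G'"
      "funF_rel I leI Ms trM J leJ Ns trN TM RM RN f G"
  have G': "fst G' = p'" "fst G = p"
    using G by (simp_all add: fs_states_iff)
  have le: "leI (fst p) (fst p')" "leJ (snd p) (snd p')"
    using p(3) by (auto simp: prod_le_def)
  have "trN (snd G' a') (snd G a)" if a: "a' \<in> Ms (fst p')" "a \<in> Ms (fst p)" "trM a' a" for a' a
  proof -
    obtain m where m: "m \<in> TM" "RM m a'" "RM m a"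
      using limit_witness_of_tr[OF fsM dpI ffI limM _ _ le(1) a] p by (auto simp: mem_Times_iff)
    then have "RN (f m) (snd G' a')" "RN (f m) (snd G a)"
      using fG a G' unfolding funF_rel_def by auto
    moreover have "f m \<in> TN"
      using f m(1) by (auto simp: funF_def)
    ultimately show ?thesis
      using is_target_tr[OF tgN _ _ _ le(2) fs_states_value_in[OF G(1) a(1)]
          fs_states_value_in[OF G(2) a(2)]] p by (auto simp: mem_Times_iff)
  qed
  then show "fs_tr I leI Ms trM J leJ Ns trN G' G"
    using G G' p unfolding fs_tr_def by auto
qed

text \<open>The limit point of this set in N is the value at m of the map into [M \<rightarrow>_F N] induced
  by b.\<close>
definition approx_values ::
  "'i set \<Rightarrow> ('i \<Rightarrow> 'i \<Rightarrow> bool) \<Rightarrow> ('i \<Rightarrow> 'a set) \<Rightarrow> ('a \<Rightarrow> 'a \<Rightarrow> bool) \<Rightarrow>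
   'j set \<Rightarrow> ('j \<Rightarrow> 'j \<Rightarrow> bool) \<Rightarrow> ('j \<Rightarrow> 'b set) \<Rightarrow> ('b \<Rightarrow> 'b \<Rightarrow> bool) \<Rightarrow>
   ('c \<Rightarrow> ('i \<times> 'j) \<times> ('a \<Rightarrow> 'b) \<Rightarrow> bool) \<Rightarrow> ('m \<Rightarrow> 'a \<Rightarrow> bool) \<Rightarrow> 'c \<Rightarrow> 'm \<Rightarrow> 'b set" where
  "approx_values I leI Ms trM J leJ Ns trN R' RM b m =
     {snd G ai | G ai. fst G \<in> I \<times> J \<and> G \<in> fs_states I leI Ms trM J leJ Ns trN (fst G) \<and>
        R' b G \<and> ai \<in> Ms (fst (fst G)) \<and> RM m ai}"

lemma approx_valuesI:
  assumes "p \<in> I \<times> J" "G \<in> fs_states I leI Ms trM J leJ Ns trN p" "R' b G"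
    and "ai \<in> Ms (fst p)" "RM m ai"
  shows "snd G ai \<in> approx_values I leI Ms trM J leJ Ns trN R' RM b m"
proof -
  have "fst G = p"
    using assms(2) by (simp add: fs_states_iff)
  with assms show ?thesis
    unfolding approx_values_def by (intro CollectI exI[of _ G] exI[of _ ai]) simp
qed

lemma approx_valuesE:
  assumes "y \<in> approx_values I leI Ms trM J leJ Ns trN R' RM b m"
  obtains p G ai where "p \<in> I \<times> J" "G \<in> fs_states I leI Ms trM J leJ Ns trN p" "R' b G"
    "ai \<in> Ms (fst p)" "RM m ai" "y = snd G ai"
proof -
  from assms obtain G ai where "fst G \<in> I \<times> J" "G \<in> fs_states I leI Ms trM J leJ Ns trN (fst G)"
    "R' b G" "ai \<in> Ms (fst (fst G))" "RM m ai" "y = snd G ai"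
    unfolding approx_values_def mem_Collect_eq by (elim exE conjE) simp
  then show thesis
    by (rule that)
qed

lemma approx_values_index:
  assumes ffJ: "filter_family J leJ FJ" and D: "condition_D I J FI FJ FIJ"
    and tgM: "is_target I leI FI Ms trM TM RM"
    and tg: "is_target (I \<times> J) (prod_le leI leJ) FIJ (fs_states I leI Ms trM J leJ Ns trN)
               (fs_tr I leI Ms trM J leJ Ns trN) T' R'"
    and b: "b \<in> T'" and m: "m \<in> TM"
  shows "{j \<in> J. \<exists>y\<in>Ns j. y \<in> approx_values I leI Ms trM J leJ Ns trN R' RM b m} \<in> FJ"
proof -
  let ?FS = "fs_states I leI Ms trM J leJ Ns trN"
  define Ib where "Ib = {p \<in> I \<times> J. \<exists>G\<in>?FS p. R' b G}"
  define Im where "Im = {i \<in> I. \<exists>a\<in>Ms i. RM m a}"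
  have "{j \<in> J. \<exists>i\<in>Im. (i, j) \<in> Ib} \<in> FJ"
    using D is_target_index[OF tg b] is_target_index[OF tgM m] unfolding Ib_def Im_def
    by (rule condition_DD)
  moreover have "{j \<in> J. \<exists>i\<in>Im. (i, j) \<in> Ib}
      \<subseteq> {j \<in> J. \<exists>y\<in>Ns j. y \<in> approx_values I leI Ms trM J leJ Ns trN R' RM b m}"
  proof safe
    fix j i assume "j \<in> J" "i \<in> Im" "(i, j) \<in> Ib"
    then obtain G ai where "(i, j) \<in> I \<times> J" "G \<in> ?FS (i, j)" "R' b G" "ai \<in> Ms i" "RM m ai"
      unfolding Ib_def Im_def by blast
    then have "snd G ai \<in> Ns j" "snd G ai \<in> approx_values I leI Ms trM J leJ Ns trN R' RM b m"
      using fs_states_value_in[where p = "(i, j)"] approx_valuesI[of "(i, j)"] by simp_all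
    then show "\<exists>y\<in>Ns j. y \<in> approx_values I leI Ms trM J leJ Ns trN R' RM b m" ..
  qed
  ultimately show ?thesis
    using filter_family_superset[OF ffJ] by blast
qed

lemma common_refinement:
  assumes dpI: "directed_preorder I leI" and dpJ: "directed_preorder J leJ"
    and ffIJ: "filter_family (I \<times> J) (prod_le leI leJ) FIJ"
    and ffJ: "filter_family J leJ FJ" and D: "condition_D I J FI FJ FIJ"
    and tgM: "is_target I leI FI Ms trM TM RM"
    and tg: "is_target (I \<times> J) (prod_le leI leJ) FIJ (fs_states I leI Ms trM J leJ Ns trN)
               (fs_tr I leI Ms trM J leJ Ns trN) T' R'"
    and b: "b \<in> T'" and m: "m \<in> TM"
    and p: "p \<in> I \<times> J" "p' \<in> I \<times> J"
  obtains i'' j'' G'' a'' where "(i'', j'') \<in> I \<times> J"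
    "prod_le leI leJ p (i'', j'')" "prod_le leI leJ p' (i'', j'')"
    "G'' \<in> fs_states I leI Ms trM J leJ Ns trN (i'', j'')" "R' b G''" "a'' \<in> Ms i''" "RM m a''"
proof -
  let ?Ib = "{p \<in> I \<times> J. \<exists>G\<in>fs_states I leI Ms trM J leJ Ns trN p. R' b G}"
  have "{q \<in> I \<times> J. prod_le leI leJ p q \<and> prod_le leI leJ p' q} \<in> FIJ"
    using filter_family_common_upper_bounds[OF directed_preorder_prod[OF dpI dpJ] ffIJ p] .
  then have "{q \<in> I \<times> J. prod_le leI leJ p q \<and> prod_le leI leJ p' q} \<inter> ?Ib \<in> FIJ"
    using filter_family_Int[OF ffIJ _ is_target_index[OF tg b]] by blast
  then show ?thesis
    using condition_D_witness[OF D dpJ ffJ _ is_target_index[OF tgM m]] that by blast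
qed

lemma approx_values_tr:
  assumes dpI: "directed_preorder I leI" and dpJ: "directed_preorder J leJ"
    and ffIJ: "filter_family (I \<times> J) (prod_le leI leJ) FIJ" and pfN: "prefactor_system J leJ Ns trN"
    and ffJ: "filter_family J leJ FJ" and D: "condition_D I J FI FJ FIJ"
    and tgM: "is_target I leI FI Ms trM TM RM"
    and tg: "is_target (I \<times> J) (prod_le leI leJ) FIJ (fs_states I leI Ms trM J leJ Ns trN)
               (fs_tr I leI Ms trM J leJ Ns trN) T' R'"
    and b: "b \<in> T'" and m: "m \<in> TM"
    and j: "j \<in> J" "j' \<in> J" "leJ j j'" and y: "y' \<in> Ns j'" "y \<in> Ns j"
    and y_values: "y' \<in> approx_values I leI Ms trM J leJ Ns trN R' RM b m"
      "y \<in> approx_values I leI Ms trM J leJ Ns trN R' RM b m"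
  shows "trN y' y"
proof -
  let ?FS = "fs_states I leI Ms trM J leJ Ns trN"
  obtain p' G' a' where G': "p' \<in> I \<times> J" "G' \<in> ?FS p'" "R' b G'" "a' \<in> Ms (fst p')" "RM m a'"
    and y'_eq: "y' = snd G' a'"
    using y_values(1) by (rule approx_valuesE)
  obtain p G a where G: "p \<in> I \<times> J" "G \<in> ?FS p" "R' b G" "a \<in> Ms (fst p)" "RM m a"
    and y_eq: "y = snd G a"
    using y_values(2) by (rule approx_valuesE)
  have "snd p' = j'" "snd p = j"
    using is_system_disjoint[OF prefactor_system_is_system[OF pfN]]
      fs_states_value_in[OF G'(2,4)] fs_states_value_in[OF G(2,4)] G'(1) G(1) j y'_eq y_eq y
    by auto
  obtain i'' j'' G'' a'' where G'': "(i'', j'') \<in> I \<times> J" "G'' \<in> ?FS (i'', j'')" "R' b G''"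
    and a'': "a'' \<in> Ms i''" "RM m a''"
    and up: "prod_le leI leJ p (i'', j'')" "prod_le leI leJ p' (i'', j'')"
    using common_refinement[OF dpI dpJ ffIJ ffJ D tgM tg b m G(1) G'(1)] by metis
  have "fs_tr I leI Ms trM J leJ Ns trN G'' G" "fs_tr I leI Ms trM J leJ Ns trN G'' G'"
    using is_target_tr[OF tg b G(1) G''(1) up(1) G''(2) G(2) G''(3) G(3)]
      is_target_tr[OF tg b G'(1) G''(1) up(2) G''(2) G'(2) G''(3) G'(3)] .
  moreover have "trM a'' a" "trM a'' a'"
    using is_target_tr[OF tgM m _ _ _ a''(1) G(4) a''(2) G(5)]
      is_target_tr[OF tgM m _ _ _ a''(1) G'(4) a''(2) G'(5)] G(1) G'(1) G''(1) up
    by (auto simp: prod_le_def mem_Times_iff)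
  ultimately have "trN (snd G'' a'') y" "trN (snd G'' a'') y'"
    using G(2,4) G'(2,4) G''(2) a''(1) y_eq y'_eq unfolding fs_tr_def by (auto simp: fs_states_iff)
  moreover have "leJ j j''" "leJ j' j''"
    using up \<open>snd p' = j'\<close> \<open>snd p = j\<close> by (auto simp: prod_le_def)
  moreover have "snd G'' a'' \<in> Ns j''" "j'' \<in> J"
    using fs_states_value_in[OF G''(2)] a''(1) G''(1) by simp_all
  ultimately show ?thesis
    using prefactor_system_tr_via_upper_bound[OF pfN j(1,2) _ j(3) _ _ y] by blast
qed

lemma approx_values_consistent:
  assumes "directed_preorder I leI" and "directed_preorder J leJ"
    and "filter_family (I \<times> J) (prod_le leI leJ) FIJ" and "prefactor_system J leJ Ns trN"
    and ffJ: "filter_family J leJ FJ" and D: "condition_D I J FI FJ FIJ"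
    and tgM: "is_target I leI FI Ms trM TM RM"
    and tg: "is_target (I \<times> J) (prod_le leI leJ) FIJ (fs_states I leI Ms trM J leJ Ns trN)
               (fs_tr I leI Ms trM J leJ Ns trN) T' R'"
    and b: "b \<in> T'" and m: "m \<in> TM"
  shows "consistent_set J leJ FJ Ns trN (approx_values I leI Ms trM J leJ Ns trN R' RM b m)"
  using approx_values_index[OF ffJ D tgM tg b m] approx_values_tr[OF assms]
  unfolding consistent_set_def by blast

lemma funF_rel_approx_iff:
  "(\<forall>p\<in>I \<times> J. \<forall>G\<in>fs_states I leI Ms trM J leJ Ns trN p.
      R' b G \<longrightarrow> funF_rel I leI Ms trM J leJ Ns trN TM RM RN f G) \<longleftrightarrow>
   (\<forall>m\<in>TM. \<forall>j\<in>J. \<forall>y\<in>Ns j. y \<in> approx_values I leI Ms trM J leJ Ns trN R' RM b m \<longrightarrow> RN (f m) y)"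
    (is "?rel \<longleftrightarrow> ?pointwise")
proof
  assume ?rel
  show ?pointwise
  proof (intro ballI impI)
    fix m j y assume "m \<in> TM" "y \<in> approx_values I leI Ms trM J leJ Ns trN R' RM b m"
    then obtain p G ai where "p \<in> I \<times> J" "G \<in> fs_states I leI Ms trM J leJ Ns trN p" "R' b G"
      "ai \<in> Ms (fst p)" "RM m ai" "y = snd G ai"
      by (auto elim: approx_valuesE)
    with \<open>?rel\<close> \<open>m \<in> TM\<close> show "RN (f m) y"
      by (auto simp: funF_rel_def fs_states_iff)
  qed
next
  assume ?pointwise
  show ?rel
  proof (intro ballI impI)
    fix p G
    assume p: "p \<in> I \<times> J" and G: "G \<in> fs_states I leI Ms trM J leJ Ns trN p" "R' b G"
    have "RN (f m) (snd G ai)" if "m \<in> TM" "ai \<in> Ms (fst p)" "RM m ai" for m ai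
    proof -
      have "snd G ai \<in> Ns (snd p)"
        using fs_states_value_in[OF G(1) that(2)] .
      moreover have "snd G ai \<in> approx_values I leI Ms trM J leJ Ns trN R' RM b m"
        using approx_valuesI[where R' = R' and b = b and RM = RM and m = m, OF p G that(2,3)] .
      ultimately show ?thesis
        using \<open>?pointwise\<close> that(1) p by (auto simp: mem_Times_iff)
    qed
    then show "funF_rel I leI Ms trM J leJ Ns trN TM RM RN f G"
      using p G(1) unfolding funF_rel_def by (auto simp: fs_states_iff)
  qed
qed

lemma funF_index_in_filter:
  assumes ffIJ: "filter_family (I \<times> J) (prod_le leI leJ) FIJ"
    and tg: "is_target (I \<times> J) (prod_le leI leJ) FIJ (fs_states I leI Ms trM J leJ Ns trN)
               (fs_tr I leI Ms trM J leJ Ns trN) T' R'"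
    and b: "b \<in> T'"
    and rel: "\<forall>p\<in>I \<times> J. \<forall>G\<in>fs_states I leI Ms trM J leJ Ns trN p.
                R' b G \<longrightarrow> funF_rel I leI Ms trM J leJ Ns trN TM RM RN f G"
  shows "funF_index I leI Ms trM J leJ Ns trN TM RM RN f \<in> FIJ"
proof (rule filter_family_superset[OF ffIJ is_target_index[OF tg b]])
  show "{p \<in> I \<times> J. \<exists>G\<in>fs_states I leI Ms trM J leJ Ns trN p. R' b G}
      \<subseteq> funF_index I leI Ms trM J leJ Ns trN TM RM RN f"
    using rel unfolding funF_index_def by blast
qed (auto simp: funF_index_def)

lemma funF_universal:
  fixes Ns :: "'j \<Rightarrow> 'b set" and T' :: "'c set"
  assumes dpI: "directed_preorder I leI" and dpJ: "directed_preorder J leJ"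
    and ffJ: "filter_family J leJ FJ" and ffIJ: "filter_family (I \<times> J) (prod_le leI leJ) FIJ"
    and D: "condition_D I J FI FJ FIJ" and pfN: "prefactor_system J leJ Ns trN"
    and tgM: "is_target I leI FI Ms trM TM RM"
    and limN: "is_limit TYPE('b set) J leJ FJ Ns trN TN RN"
    and tg: "is_target (I \<times> J) (prod_le leI leJ) FIJ (fs_states I leI Ms trM J leJ Ns trN)
               (fs_tr I leI Ms trM J leJ Ns trN) T' R'"
  shows "\<exists>!\<Phi>. \<Phi> \<in> T' \<rightarrow>\<^sub>E funF I leI Ms trM J leJ Ns trN FIJ TM RM TN RN \<and>
           (\<forall>b\<in>T'. \<forall>p\<in>I \<times> J. \<forall>G\<in>fs_states I leI Ms trM J leJ Ns trN p.
              R' b G \<longrightarrow> funF_rel I leI Ms trM J leJ Ns trN TM RM RN (\<Phi> b) G)"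
proof (rule ex1_PiE)
  fix b assume b: "b \<in> T'"
  have "\<exists>!f. f \<in> TM \<rightarrow>\<^sub>E TN \<and> (\<forall>m\<in>TM. \<forall>j\<in>J. \<forall>y\<in>Ns j.
          y \<in> approx_values I leI Ms trM J leJ Ns trN R' RM b m \<longrightarrow> RN (f m) y)"
    by (rule ex1_PiE, rule limit_point_of_consistent_set[OF limN],
        rule approx_values_consistent[OF dpI dpJ ffIJ pfN ffJ D tgM tg b])
  moreover have "f \<in> funF I leI Ms trM J leJ Ns trN FIJ TM RM TN RN \<and>
      (\<forall>p\<in>I \<times> J. \<forall>G\<in>fs_states I leI Ms trM J leJ Ns trN p.
         R' b G \<longrightarrow> funF_rel I leI Ms trM J leJ Ns trN TM RM RN f G) \<longleftrightarrow>
    f \<in> TM \<rightarrow>\<^sub>E TN \<and> (\<forall>m\<in>TM. \<forall>j\<in>J. \<forall>y\<in>Ns j.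
          y \<in> approx_values I leI Ms trM J leJ Ns trN R' RM b m \<longrightarrow> RN (f m) y)" for f
    using funF_index_in_filter[OF ffIJ tg b, of TM RM RN f]
    unfolding funF_rel_approx_iff funF_def mem_Collect_eq by blast
  ultimately show "\<exists>!f. f \<in> funF I leI Ms trM J leJ Ns trN FIJ TM RM TN RN \<and>
      (\<forall>p\<in>I \<times> J. \<forall>G\<in>fs_states I leI Ms trM J leJ Ns trN p.
         R' b G \<longrightarrow> funF_rel I leI Ms trM J leJ Ns trN TM RM RN f G)"
    by simp
qed

theorem corollary2p15:
  fixes I :: "'i set" and leI :: "'i \<Rightarrow> 'i \<Rightarrow> bool" and FI :: "'i set set"
    and J :: "'j set" and leJ :: "'j \<Rightarrow> 'j \<Rightarrow> bool" and FJ :: "'j set set"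
    and FIJ :: "('i \<times> 'j) set set"
    and Ms :: "'i \<Rightarrow> 'a set" and trM :: "'a \<Rightarrow> 'a \<Rightarrow> bool"
    and embM :: "'i \<Rightarrow> 'i \<Rightarrow> 'a \<Rightarrow> 'a" and projM :: "'i \<Rightarrow> 'i \<Rightarrow> 'a \<Rightarrow> 'a"
    and Ns :: "'j \<Rightarrow> 'b set" and trN :: "'b \<Rightarrow> 'b \<Rightarrow> bool"
    and embN :: "'j \<Rightarrow> 'j \<Rightarrow> 'b \<Rightarrow> 'b" and projN :: "'j \<Rightarrow> 'j \<Rightarrow> 'b \<Rightarrow> 'b"
    and TM :: "'m set" and RM :: "'m \<Rightarrow> 'a \<Rightarrow> bool"
    and TN :: "'n set" and RN :: "'n \<Rightarrow> 'b \<Rightarrow> bool"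
  assumes "directed_preorder I leI" and "directed_preorder J leJ"
    and "filter_family I leI FI" and "filter_family J leJ FJ"
    and "filter_family (I \<times> J) (prod_le leI leJ) FIJ"
    and "condition_D I J FI FJ FIJ"
    and "factor_system I leI Ms trM embM projM"
    and "factor_system J leJ Ns trN embN projN"
    and "is_limit TYPE('a set) I leI FI Ms trM TM RM"
    and "is_limit TYPE('b set) J leJ FJ Ns trN TN RN"
  shows "is_limit TYPE('c) (I \<times> J) (prod_le leI leJ) FIJ
           (fs_states I leI Ms trM J leJ Ns trN) (fs_tr I leI Ms trM J leJ Ns trN)
           (funF I leI Ms trM J leJ Ns trN FIJ TM RM TN RN)
           (funF_rel I leI Ms trM J leJ Ns trN TM RM RN)"
  unfolding is_limit_def
proof (intro conjI allI impI)
  show "is_target (I \<times> J) (prod_le leI leJ) FIJ (fs_states I leI Ms trM J leJ Ns trN)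
      (fs_tr I leI Ms trM J leJ Ns trN) (funF I leI Ms trM J leJ Ns trN FIJ TM RM TN RN)
      (funF_rel I leI Ms trM J leJ Ns trN TM RM RN)"
    using funF_is_target[OF assms(1,3,7,9) is_limit_target[OF assms(10)]] .
next
  fix T' :: "'c set" and R'
  assume tg: "is_target (I \<times> J) (prod_le leI leJ) FIJ (fs_states I leI Ms trM J leJ Ns trN)
      (fs_tr I leI Ms trM J leJ Ns trN) T' R'"
  show "\<exists>!\<Phi>. \<Phi> \<in> T' \<rightarrow>\<^sub>E funF I leI Ms trM J leJ Ns trN FIJ TM RM TN RN \<and>
      (\<forall>b\<in>T'. \<forall>p\<in>I \<times> J. \<forall>G\<in>fs_states I leI Ms trM J leJ Ns trN p.
         R' b G \<longrightarrow> funF_rel I leI Ms trM J leJ Ns trN TM RM RN (\<Phi> b) G)"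
    by (rule funF_universal[OF assms(1,2,4,5,6) factor_system_prefactor[OF assms(8)]
        is_limit_target[OF assms(9)] assms(10) tg])
qed

end
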